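(* Let $a,b,c\in\mathbb F$ and $d\in\mathbb N$. If the $\Re$-module $R_d(a,b,c)$ is irreducible, then it is isomorphic to each of $R_d(-a-1,b,c)$, $R_d(a,-b-1,c)$ and $R_d(a,b,-c-1)$.
   Context: $\mathbb F$ is algebraically closed with $\operatorname{char}\mathbb F\ne2$. The Racah algebra $\Re$ is the unital associative $\mathbb F$-algebra with generators $A,B,C,D$ and relations $[A,B]=[B,C]=[C,A]=2D$ together with the requirement that each of $\alpha:=[A,D]+AC-BA$, $\beta:=[B,D]+BA-CB$, $\gamma:=[C,D]+CB-AC$ is central in $\Re$; $\delta:=A+B+C$. For $a,b,c\in\mathbb F$ and $d\in\mathbb N$ set $\theta_i=(a+\tfrac d2-i)(a+\tfrac d2-i+1)$, $\theta_i^*=(b+\tfrac d2-i)(b+\tfrac d2-i+1)$, $\varphi_i=i(i-d-1)(a+b+c+\tfrac d2-i+2)(a+b-c+\tfrac d2-i+1)$. $R_d(a,b,c)$ denotes the $(d+1)$-dimensional $\Re$-module with a basis $v_0,\dots,v_d$ such that $Av_i=\theta_iv_i+v_{i+1}$ ($v_{d+1}=0$), $Bv_i=\theta_i^*v_i+\varphi_iv_{i-1}$ ($v_{-1}=0$), and $\alpha,\beta,\delta$ act as the scalars $(c-b)(c+b+1)(a-\tfrac d2)(a+\tfrac d2+1)$, $(a-c)(a+c+1)(b-\tfrac d2)(b+\tfrac d2+1)$, $\tfrac d2(\tfrac d2+1)+a(a+1)+b(b+1)+c(c+1)$ respectively (exists, unique up to isomorphism). *)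

theory Defs
  imports "HOL-Computational_Algebra.Polynomial" "Jordan_Normal_Form.Matrix"
begin

text \<open>The module R_d(a,b,c) is realised on the column space F^(d+1) with
  v_i the i-th standard basis vector (i = 0..d).  The generators A and B act
  by the matrices below; since delta = A + B + C and [A,B] = 2D, the action of
  C is delta*I - A - B and that of D is (AB - BA)/2.\<close>

definition half_d :: "nat \<Rightarrow> 'a::field" where
  "half_d d = of_nat d / 2"

definition rac_theta :: "'a::field \<Rightarrow> nat \<Rightarrow> nat \<Rightarrow> 'a" where
  "rac_theta a d i = (a + half_d d - of_nat i) * (a + half_d d - of_nat i + 1)"

definition rac_phi :: "'a::field \<Rightarrow> 'a \<Rightarrow> 'a \<Rightarrow> nat \<Rightarrow> nat \<Rightarrow> 'a" where
  "rac_phi a b c d i = of_nat i * (of_nat i - of_nat d - 1)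
     * (a + b + c + half_d d - of_nat i + 2) * (a + b - c + half_d d - of_nat i + 1)"

definition rac_delta :: "'a::field \<Rightarrow> 'a \<Rightarrow> 'a \<Rightarrow> nat \<Rightarrow> 'a" where
  "rac_delta a b c d = half_d d * (half_d d + 1) + a * (a + 1) + b * (b + 1) + c * (c + 1)"

text \<open>A v_i = theta_i v_i + v_(i+1): column i has theta_i at row i, 1 at row i+1.\<close>
definition RA :: "nat \<Rightarrow> 'a::field \<Rightarrow> 'a \<Rightarrow> 'a \<Rightarrow> 'a mat" where
  "RA d a b c = mat (d+1) (d+1)
     (\<lambda>(r, s). if r = s then rac_theta a d s else if r = s + 1 then 1 else 0)"

text \<open>B v_i = theta*_i v_i + phi_i v_(i-1): column i has theta*_i at row i, phi_i at row i-1.\<close>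
definition RB :: "nat \<Rightarrow> 'a::field \<Rightarrow> 'a \<Rightarrow> 'a \<Rightarrow> 'a mat" where
  "RB d a b c = mat (d+1) (d+1)
     (\<lambda>(r, s). if r = s then rac_theta b d s else if r + 1 = s then rac_phi a b c d s else 0)"

definition RC :: "nat \<Rightarrow> 'a::field \<Rightarrow> 'a \<Rightarrow> 'a \<Rightarrow> 'a mat" where
  "RC d a b c = rac_delta a b c d \<cdot>\<^sub>m 1\<^sub>m (d+1) - RA d a b c - RB d a b c"

definition RD :: "nat \<Rightarrow> 'a::field \<Rightarrow> 'a \<Rightarrow> 'a \<Rightarrow> 'a mat" where
  "RD d a b c = inverse 2 \<cdot>\<^sub>m (RA d a b c * RB d a b c - RB d a b c * RA d a b c)"

definition rac_gens :: "nat \<Rightarrow> 'a::field \<Rightarrow> 'a \<Rightarrow> 'a \<Rightarrow> 'a mat list" where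
  "rac_gens d a b c = [RA d a b c, RB d a b c, RC d a b c, RD d a b c]"

text \<open>A submodule: a subspace of F^n stable under all generators (hence under the
  whole algebra).\<close>
definition is_submodule :: "nat \<Rightarrow> 'a::field mat list \<Rightarrow> 'a vec set \<Rightarrow> bool" where
  "is_submodule n Ms W \<longleftrightarrow> W \<subseteq> carrier_vec n \<and> 0\<^sub>v n \<in> W
     \<and> (\<forall>v\<in>W. \<forall>w\<in>W. v + w \<in> W) \<and> (\<forall>k. \<forall>v\<in>W. k \<cdot>\<^sub>v v \<in> W)
     \<and> (\<forall>M\<in>set Ms. \<forall>v\<in>W. M *\<^sub>v v \<in> W)"

definition rac_irreducible :: "nat \<Rightarrow> 'a::field \<Rightarrow> 'a \<Rightarrow> 'a \<Rightarrow> bool" where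
  "rac_irreducible d a b c \<longleftrightarrow>
     (\<forall>W. is_submodule (d+1) (rac_gens d a b c) W \<longrightarrow> W = {0\<^sub>v (d+1)} \<or> W = carrier_vec (d+1))"

definition rac_iso :: "nat \<Rightarrow> 'a::field \<Rightarrow> 'a \<Rightarrow> 'a \<Rightarrow> 'a \<Rightarrow> 'a \<Rightarrow> 'a \<Rightarrow> bool" where
  "rac_iso d a b c a' b' c' \<longleftrightarrow>
     (\<exists>P Q. P \<in> carrier_mat (d+1) (d+1) \<and> Q \<in> carrier_mat (d+1) (d+1)
        \<and> P * Q = 1\<^sub>m (d+1) \<and> Q * P = 1\<^sub>m (d+1)
        \<and> (\<forall>i<4. P * (rac_gens d a b c ! i) = (rac_gens d a' b' c' ! i) * P))"

end

theory Submission
  imports Defs "Jordan_Normal_Form.Determinant"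
begin

text \<open>The module depends on \<open>c\<close> only through \<open>\<phi>\<^sub>i\<close> and \<open>\<delta>\<close>, which are invariant under
  \<open>c \<mapsto> -c-1\<close>. For \<open>a \<mapsto> -a-1\<close> an explicit upper unitriangular matrix intertwines the actions
  of \<open>A\<close> and \<open>B\<close>, hence of the whole algebra, since \<open>C\<close> and \<open>D\<close> are polynomials in \<open>A\<close>, \<open>B\<close>
  and the scalar \<open>\<delta>\<close>; this needs no irreducibility. Irreducibility forces every \<open>\<phi>\<^sub>i\<close>
  (\<open>1 \<le> i \<le> d\<close>) to be nonzero, as otherwise \<open>span {v\<^sub>i, \<dots>, v\<^sub>d}\<close> is a proper submodule. Then
  rescaling the basis by the partial products of the \<open>\<phi>\<^sub>i\<close> identifies the transposed action of
  \<open>(A, B)\<close> on \<open>R\<^sub>d(a,b,c)\<close> with the action of \<open>(B, A)\<close> on \<open>R\<^sub>d(b,a,c)\<close>; conjugating the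
  reflection \<open>b \<mapsto> -b-1\<close> of the first parameter of \<open>R\<^sub>d(b,a,c)\<close> by this duality gives the
  remaining isomorphism.\<close>

section \<open>Simultaneous similarity of pairs of matrices\<close>

definition simultaneously_similar :: "'a::semiring_1 mat \<Rightarrow> 'a mat \<Rightarrow> 'a mat \<Rightarrow> 'a mat \<Rightarrow> bool" where
  "simultaneously_similar A B A' B' \<longleftrightarrow> (\<exists>P Q. similar_mat_wit A A' P Q \<and> similar_mat_wit B B' P Q)"

lemma simultaneously_similar_sym:
  "simultaneously_similar A B A' B' \<Longrightarrow> simultaneously_similar A' B' A B"
  unfolding simultaneously_similar_def by (blast intro: similar_mat_wit_sym)

lemma simultaneously_similar_trans [trans]:
  "simultaneously_similar A B A' B' \<Longrightarrow> simultaneously_similar A' B' A'' B''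
    \<Longrightarrow> simultaneously_similar A B A'' B''"
  unfolding simultaneously_similar_def by (blast intro: similar_mat_wit_trans)

lemma simultaneously_similar_commute:
  "simultaneously_similar A B A' B' \<Longrightarrow> simultaneously_similar B A B' A'"
  unfolding simultaneously_similar_def by blast

lemma similar_mat_wit_carrierE:
  assumes "similar_mat_wit A A' P Q" "P \<in> carrier_mat n n"
  obtains "A \<in> carrier_mat n n" "A' \<in> carrier_mat n n" "Q \<in> carrier_mat n n"
    "P * Q = 1\<^sub>m n" "Q * P = 1\<^sub>m n" "A = P * A' * Q"
proof -
  have "n = dim_row A"
    using carrier_matD(1)[OF similar_mat_witD(6)[OF refl assms(1)]] carrier_matD(1)[OF assms(2)]
    by simp
  note wit = similar_mat_witD[OF this assms(1)]
  show ?thesis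
    by (rule that[OF wit(4,5,7,1,2,3)])
qed

lemma similar_mat_wit_transpose:
  fixes A :: "'a::comm_ring_1 mat"
  assumes "similar_mat_wit A A' P Q"
  shows "similar_mat_wit A\<^sup>T A'\<^sup>T Q\<^sup>T P\<^sup>T"
proof -
  obtain n where c: "A \<in> carrier_mat n n" "A' \<in> carrier_mat n n" "P \<in> carrier_mat n n" "Q \<in> carrier_mat n n"
    and PQ: "P * Q = 1\<^sub>m n" "Q * P = 1\<^sub>m n" and A: "A = P * A' * Q"
    using similar_mat_witD[OF refl assms] by blast
  have "Q\<^sup>T * P\<^sup>T = 1\<^sub>m n" "P\<^sup>T * Q\<^sup>T = 1\<^sub>m n"
    using PQ c by (metis transpose_mult transpose_one)+
  moreover have "A\<^sup>T = Q\<^sup>T * A'\<^sup>T * P\<^sup>T"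
    using c unfolding A by (simp add: transpose_mult[of _ n n _ n] assoc_mult_mat[of _ n n _ n _ n])
  ultimately show ?thesis
    using c by (intro similar_mat_witI[of _ _ n]) auto
qed

lemma simultaneously_similar_transpose:
  fixes A :: "'a::comm_ring_1 mat"
  shows "simultaneously_similar A B A' B' \<Longrightarrow> simultaneously_similar A\<^sup>T B\<^sup>T A'\<^sup>T B'\<^sup>T"
  unfolding simultaneously_similar_def by (blast intro: similar_mat_wit_transpose)

lemma simultaneously_similarI:
  fixes A :: "'a::comm_ring_1 mat"
  assumes "P \<in> carrier_mat n n" "Q \<in> carrier_mat n n" "P * Q = 1\<^sub>m n" "Q * P = 1\<^sub>m n"
    and "A \<in> carrier_mat n n" "B \<in> carrier_mat n n" "A' \<in> carrier_mat n n" "B' \<in> carrier_mat n n"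
    and "P * A = A' * P" "P * B = B' * P"
  shows "simultaneously_similar A B A' B'"
proof -
  have "similar_mat_wit X X' Q P"
    if "X \<in> carrier_mat n n" "X' \<in> carrier_mat n n" "P * X = X' * P" for X X'
  proof (rule similar_mat_witI[of _ _ n])
    have "Q * X' * P = Q * (X' * P)"
      by (rule assoc_mult_mat) (use assms that in auto)
    also have "\<dots> = (Q * P) * X"
      unfolding that(3)[symmetric] by (rule assoc_mult_mat[symmetric]) (use assms that in auto)
    finally show "X = Q * X' * P"
      using assms that by simp
  qed (use assms that in auto)
  then show ?thesis
    unfolding simultaneously_similar_def using assms by blast
qed

lemma simultaneously_similar_if_det_nonzero:
  fixes A :: "'a::field mat"
  assumes "P \<in> carrier_mat n n" "det P \<noteq> 0"
    and "A \<in> carrier_mat n n" "B \<in> carrier_mat n n" "A' \<in> carrier_mat n n" "B' \<in> carrier_mat n n"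
    and "P * A = A' * P" "P * B = B' * P"
  shows "simultaneously_similar A B A' B'"
proof -
  have "P \<in> Units (ring_mat TYPE('a) n undefined)"
    by (rule det_non_zero_imp_unit[OF assms(1,2)])
  then obtain Q where "Q \<in> carrier_mat n n" "P * Q = 1\<^sub>m n" "Q * P = 1\<^sub>m n"
    unfolding Units_def ring_mat_def by auto
  then show ?thesis
    using assms by (intro simultaneously_similarI)
qed

lemma similar_mat_wit_one:
  assumes "similar_mat_wit A A' P Q" "P \<in> carrier_mat n n"
  shows "similar_mat_wit (1\<^sub>m n) (1\<^sub>m n) P Q"
proof -
  obtain "Q \<in> carrier_mat n n" "P * Q = 1\<^sub>m n" "Q * P = 1\<^sub>m n"
    using assms by (rule similar_mat_wit_carrierE)
  then show ?thesis
    using assms(2) by (intro similar_mat_witI) auto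
qed

lemma similar_mat_wit_smult:
  fixes A :: "'a::comm_ring_1 mat"
  assumes "similar_mat_wit A A' P Q"
  shows "similar_mat_wit (k \<cdot>\<^sub>m A) (k \<cdot>\<^sub>m A') P Q"
proof -
  obtain n where P: "P \<in> carrier_mat n n"
    using similar_mat_witD(6)[OF refl assms] by blast
  obtain cA: "A \<in> carrier_mat n n" "A' \<in> carrier_mat n n" and Q: "Q \<in> carrier_mat n n"
    and PQ: "P * Q = 1\<^sub>m n" "Q * P = 1\<^sub>m n" and eq: "A = P * A' * Q"
    using assms P by (rule similar_mat_wit_carrierE)
  have "P * (k \<cdot>\<^sub>m A') * Q = k \<cdot>\<^sub>m (P * A' * Q)"
    unfolding mult_smult_distrib[OF P cA(2)] mult_smult_assoc_mat[OF mult_carrier_mat[OF P cA(2)] Q] ..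
  then show ?thesis
    using P cA Q by (intro similar_mat_witI[OF PQ]) (simp_all add: eq)
qed

lemma similar_mat_wit_minus:
  fixes A :: "'a::comm_ring_1 mat"
  assumes "similar_mat_wit A A' P Q" "similar_mat_wit B B' P Q"
  shows "similar_mat_wit (A - B) (A' - B') P Q"
proof -
  obtain n where P: "P \<in> carrier_mat n n"
    using similar_mat_witD(6)[OF refl assms(1)] by blast
  obtain cA: "A \<in> carrier_mat n n" "A' \<in> carrier_mat n n" and Q: "Q \<in> carrier_mat n n"
    and PQ: "P * Q = 1\<^sub>m n" "Q * P = 1\<^sub>m n" and eqA: "A = P * A' * Q"
    using assms(1) P by (rule similar_mat_wit_carrierE)
  obtain cB: "B \<in> carrier_mat n n" "B' \<in> carrier_mat n n" and eqB: "B = P * B' * Q"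
    using assms(2) P by (rule similar_mat_wit_carrierE)
  have "P * (A' - B') * Q = P * A' * Q - P * B' * Q"
    unfolding mult_minus_distrib_mat[OF P cA(2) cB(2)]
    by (rule minus_mult_distrib_mat) (use P cA cB Q in auto)
  then show ?thesis
    using P cA cB Q by (intro similar_mat_witI[OF PQ]) (simp_all add: eqA eqB minus_carrier_mat)
qed

lemma similar_mat_wit_mult:
  fixes A :: "'a::comm_ring_1 mat"
  assumes "similar_mat_wit A A' P Q" "similar_mat_wit B B' P Q"
  shows "similar_mat_wit (A * B) (A' * B') P Q"
proof -
  obtain n where P: "P \<in> carrier_mat n n"
    using similar_mat_witD(6)[OF refl assms(1)] by blast
  obtain cA: "A \<in> carrier_mat n n" "A' \<in> carrier_mat n n" and Q: "Q \<in> carrier_mat n n"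
    and PQ: "P * Q = 1\<^sub>m n" "Q * P = 1\<^sub>m n" and eqA: "A = P * A' * Q"
    using assms(1) P by (rule similar_mat_wit_carrierE)
  obtain cB: "B \<in> carrier_mat n n" "B' \<in> carrier_mat n n" and eqB: "B = P * B' * Q"
    using assms(2) P by (rule similar_mat_wit_carrierE)
  have "A * B = P * A' * ((Q * P) * (B' * Q))"
    using P cA cB Q unfolding eqA eqB by (simp add: mult_carrier_mat[of _ n n _ n] assoc_mult_mat[of _ n n _ n _ n])
  also have "\<dots> = P * (A' * B') * Q"
    using P cA cB Q unfolding PQ by (simp add: mult_carrier_mat[of _ n n _ n] assoc_mult_mat[of _ n n _ n _ n])
  finally show ?thesis
    using P cA cB Q by (intro similar_mat_witI[OF PQ]) auto
qed

lemma similar_mat_wit_intertwines: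
  assumes "similar_mat_wit A A' P Q"
  shows "Q * A = A' * Q"
proof -
  obtain n where P: "P \<in> carrier_mat n n"
    using similar_mat_witD(6)[OF refl assms] by blast
  obtain c: "A' \<in> carrier_mat n n" "Q \<in> carrier_mat n n" and QP: "Q * P = 1\<^sub>m n"
    and eq: "A = P * A' * Q"
    using assms P by (rule similar_mat_wit_carrierE)
  have "Q * A = (Q * P) * (A' * Q)"
    using P c unfolding eq by (simp add: mult_carrier_mat[of _ n n _ n] assoc_mult_mat[of _ n n _ n _ n])
  then show ?thesis
    using c unfolding QP by simp
qed

lemma RA_carrier: "RA d a b c \<in> carrier_mat (d+1) (d+1)"
  by (simp add: RA_def)

lemma RB_carrier: "RB d a b c \<in> carrier_mat (d+1) (d+1)"
  by (simp add: RB_def)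

(* the simplifier normalises d+1 to Suc d *)
declare RA_carrier[simplified, simp] RB_carrier[simplified, simp]

lemma rac_gens_carrier: "M \<in> set (rac_gens d a b c) \<Longrightarrow> M \<in> carrier_mat (d+1) (d+1)"
  by (auto simp: rac_gens_def RA_def RB_def RC_def RD_def)

lemma rac_phi_swap: "rac_phi b a c d i = rac_phi a b c d i"
  unfolding rac_phi_def by (simp add: algebra_simps)

lemma rac_phi_top: "rac_phi a b c d (d+1) = 0"
  unfolding rac_phi_def by simp

lemma rac_phi_neg_c: "rac_phi a b (-c-1) d i = rac_phi a b c d i"
  unfolding rac_phi_def by (simp add: algebra_simps)

lemma rac_phi_neg_b:
  fixes a b c :: "'a::field"
  assumes "(2::'a) \<noteq> 0" and "k \<le> d"
  shows "rac_phi a (-b-1) c d k = rac_phi (-a-1) b c d (d+1-k)"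
proof -
  have d: "(of_nat d::'a) = 2 * half_d d"
    using assms(1) by (simp add: half_d_def)
  have k: "(of_nat (d+1-k)::'a) = 2 * half_d d + 1 - of_nat k"
    using assms(2) by (simp add: d)
  show ?thesis
    unfolding rac_phi_def k d by (simp add: algebra_simps)
qed

lemma rac_delta_neg_a: "rac_delta (-a-1) b c d = rac_delta a b c d"
  and rac_delta_neg_b: "rac_delta a (-b-1) c d = rac_delta a b c d"
  and rac_delta_neg_c: "rac_delta a b (-c-1) d = rac_delta a b c d"
  unfolding rac_delta_def by (simp_all add: algebra_simps)

lemma rac_gens_neg_c: "rac_gens d a b (-c-1) = rac_gens d a b c"
proof -
  have "RA d a b (-c-1) = RA d a b c" "RB d a b (-c-1) = RB d a b c"
    unfolding RA_def RB_def rac_phi_neg_c by simp_all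
  then show ?thesis
    unfolding rac_gens_def RC_def RD_def rac_delta_neg_c by simp
qed

lemma rac_iso_refl: "rac_iso d a b c a b c"
proof -
  have "1\<^sub>m (d+1) * M = M * 1\<^sub>m (d+1)" if "M \<in> set (rac_gens d a b c)" for M
    using rac_gens_carrier[OF that] by simp
  moreover have "length (rac_gens d a b c) = 4"
    by (simp add: rac_gens_def)
  ultimately show ?thesis
    unfolding rac_iso_def by (intro exI[of _ "1\<^sub>m (d+1)"]) (simp add: nth_mem)
qed

lemma rac_iso_if_simultaneously_similar:
  fixes a b c :: "'a::field"
  assumes "simultaneously_similar (RA d a b c) (RB d a b c) (RA d a' b' c') (RB d a' b' c')"
    and "rac_delta a b c d = rac_delta a' b' c' d"
  shows "rac_iso d a b c a' b' c'"
proof -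
  obtain P Q where A: "similar_mat_wit (RA d a b c) (RA d a' b' c') P Q"
    and B: "similar_mat_wit (RB d a b c) (RB d a' b' c') P Q"
    using assms(1) unfolding simultaneously_similar_def by blast
  obtain P: "P \<in> carrier_mat (d+1) (d+1)" and Q: "Q \<in> carrier_mat (d+1) (d+1)"
    and PQ: "P * Q = 1\<^sub>m (d+1)" "Q * P = 1\<^sub>m (d+1)"
    using similar_mat_witD2[OF RA_carrier A] by blast
  have C: "similar_mat_wit (RC d a b c) (RC d a' b' c') P Q"
    unfolding RC_def assms(2)
    by (intro similar_mat_wit_minus similar_mat_wit_smult similar_mat_wit_one[OF A P] A B)
  have D: "similar_mat_wit (RD d a b c) (RD d a' b' c') P Q"
    unfolding RD_def by (intro similar_mat_wit_smult similar_mat_wit_minus similar_mat_wit_mult A B)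
  have "Q * rac_gens d a b c ! i = rac_gens d a' b' c' ! i * Q" if "i < 4" for i
    using that A B C D
    by (auto simp: rac_gens_def less_Suc_eq numeral_eq_Suc intro: similar_mat_wit_intertwines)
  then show ?thesis
    unfolding rac_iso_def using P Q PQ by blast
qed

lemma index_mult_mat_sum:
  assumes "A \<in> carrier_mat n n" "B \<in> carrier_mat n n" "r < n" "s < n"
  shows "(A * B) $$ (r,s) = (\<Sum>k<n. A $$ (r,k) * B $$ (k,s))"
  using assms by (auto simp: scalar_prod_def lessThan_atLeast0 intro!: sum.cong)

lemma mult_RA_index:
  assumes "M \<in> carrier_mat (d+1) (d+1)" "r \<le> d" "s \<le> d"
  shows "(M * RA d a b c) $$ (r,s)
    = M $$ (r,s) * rac_theta a d s + (if s < d then M $$ (r,s+1) else 0)"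
proof -
  have "(M * RA d a b c) $$ (r,s) = (\<Sum>k<d+1. M $$ (r,k) * RA d a b c $$ (k,s))"
    using assms by (intro index_mult_mat_sum) (auto simp: RA_def)
  also have "\<dots> = (\<Sum>k<d+1. (if k = s then M $$ (r,k) * rac_theta a d s else 0)
      + (if k = s+1 then M $$ (r,k) else 0))"
    by (rule sum.cong) (use assms in \<open>auto simp: RA_def\<close>)
  finally show ?thesis using assms by (simp add: sum.distrib)
qed

lemma RA_mult_index:
  assumes "M \<in> carrier_mat (d+1) (d+1)" "r \<le> d" "s \<le> d"
  shows "(RA d a b c * M) $$ (r,s)
    = rac_theta a d r * M $$ (r,s) + (if 0 < r then M $$ (r-1,s) else 0)"
proof -
  have "(RA d a b c * M) $$ (r,s) = (\<Sum>k<d+1. RA d a b c $$ (r,k) * M $$ (k,s))"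
    using assms by (intro index_mult_mat_sum) (auto simp: RA_def)
  also have "\<dots> = (\<Sum>k<d+1. (if k = r then rac_theta a d r * M $$ (k,s) else 0)
      + (if k = r - 1 then (if 0 < r then M $$ (k,s) else 0) else 0))"
    by (rule sum.cong) (use assms in \<open>auto simp: RA_def\<close>)
  finally show ?thesis using assms by (auto simp: sum.distrib)
qed

lemma mult_RB_index:
  assumes "M \<in> carrier_mat (d+1) (d+1)" "r \<le> d" "s \<le> d"
  shows "(M * RB d a b c) $$ (r,s)
    = M $$ (r,s) * rac_theta b d s + (if 0 < s then M $$ (r,s-1) * rac_phi a b c d s else 0)"
proof -
  have "(M * RB d a b c) $$ (r,s) = (\<Sum>k<d+1. M $$ (r,k) * RB d a b c $$ (k,s))"
    using assms by (intro index_mult_mat_sum) (auto simp: RB_def)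
  also have "\<dots> = (\<Sum>k<d+1. (if k = s then M $$ (r,k) * rac_theta b d s else 0)
      + (if k = s - 1 then (if 0 < s then M $$ (r,k) * rac_phi a b c d s else 0) else 0))"
    by (rule sum.cong) (use assms in \<open>auto simp: RB_def\<close>)
  finally show ?thesis using assms by (auto simp: sum.distrib)
qed

lemma RB_mult_index:
  assumes "M \<in> carrier_mat (d+1) (d+1)" "r \<le> d" "s \<le> d"
  shows "(RB d a b c * M) $$ (r,s)
    = rac_theta b d r * M $$ (r,s) + (if r < d then rac_phi a b c d (r+1) * M $$ (r+1,s) else 0)"
proof -
  have "(RB d a b c * M) $$ (r,s) = (\<Sum>k<d+1. RB d a b c $$ (r,k) * M $$ (k,s))"
    using assms by (intro index_mult_mat_sum) (auto simp: RB_def)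
  also have "\<dots> = (\<Sum>k<d+1. (if k = r then rac_theta b d r * M $$ (k,s) else 0)
      + (if k = r + 1 then rac_phi a b c d k * M $$ (k,s) else 0))"
    by (rule sum.cong) (use assms in \<open>auto simp: RB_def\<close>)
  finally show ?thesis using assms by (simp add: sum.distrib)
qed

section \<open>The isomorphism \<open>R\<^sub>d(a,b,c) \<cong> R\<^sub>d(-a-1,b,c)\<close>\<close>

text \<open>The unique upper unitriangular matrix intertwining the two actions of \<open>A\<close>: column \<open>s+1\<close>
  is determined by column \<open>s\<close> through \<open>reflect_a_coeff_RA_recurrence\<close>.\<close>

definition reflect_a_coeff :: "'a::field \<Rightarrow> nat \<Rightarrow> nat \<Rightarrow> nat \<Rightarrow> 'a" where
  "reflect_a_coeff a d r s = (if r \<le> s then of_nat (s choose r) * (\<Prod>k\<in>{r..<s}. of_nat k - of_nat d)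
      * (\<Prod>k<s-r. 2*a+1 - of_nat k) else 0)"

definition reflect_a_mat :: "nat \<Rightarrow> 'a::field \<Rightarrow> 'a mat" where
  "reflect_a_mat d a = mat (d+1) (d+1) (\<lambda>(r,s). reflect_a_coeff a d r s)"

lemma rac_theta_neg_diff:
  fixes a :: "'a::field"
  assumes "(2::'a) \<noteq> 0"
  shows "rac_theta (-a-1) d r - rac_theta a d s
    = (of_nat r + of_nat s - of_nat d) * (2*a + of_nat r - of_nat s + 1)"
proof -
  have "(of_nat d::'a) = 2 * half_d d"
    using assms by (simp add: half_d_def)
  then show ?thesis
    unfolding rac_theta_def by (simp add: algebra_simps)
qed

lemma reflect_a_coeff_top: "r \<le> d \<Longrightarrow> reflect_a_coeff a d r (d+1) = 0"
  unfolding reflect_a_coeff_def by (auto intro!: prod_zero bexI[of _ d])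

lemma of_nat_choose_absorb:
  shows "(of_nat m + 1) * (of_nat (r+m+1 choose r) :: 'a::comm_semiring_1)
      = of_nat (r+m+1) * of_nat (r+m choose r)"
    and "(of_nat m + 1) * (of_nat (r+m+1 choose r) :: 'a)
      = (of_nat r + 1) * of_nat (r+m+1 choose Suc r)"
proof -
  have "(r+m+1 - r) * (r+m+1 choose r) = (r+m+1) * (r+m+1-1 choose r)"
    by (rule binomial_absorb_comp)
  then have "of_nat ((m+1) * (r+m+1 choose r)) = (of_nat ((r+m+1) * (r+m choose r)) :: 'a)"
    by simp
  then show first: "(of_nat m + 1) * (of_nat (r+m+1 choose r) :: 'a)
      = of_nat (r+m+1) * of_nat (r+m choose r)"
    by (simp only: of_nat_mult of_nat_add of_nat_1)
  have "(r+1) * (r+m+1 choose Suc r) = (r+m+1) * (r+m choose r)"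
    using Suc_times_binomial[of r "r+m"] by (simp only: Suc_eq_plus1)
  then have "of_nat ((r+1) * (r+m+1 choose Suc r)) = (of_nat ((r+m+1) * (r+m choose r)) :: 'a)"
    by (simp only:)
  then have "(of_nat r + 1) * (of_nat (r+m+1 choose Suc r) :: 'a)
      = of_nat (r+m+1) * of_nat (r+m choose r)"
    by (simp only: of_nat_mult of_nat_add of_nat_1)
  then show "(of_nat m + 1) * (of_nat (r+m+1 choose r) :: 'a)
      = (of_nat r + 1) * of_nat (r+m+1 choose Suc r)"
    unfolding first by (rule sym)
qed

lemma reflect_a_step_identity:
  fixes Cj Cr X Y T S D R J M :: "'a::field"
  assumes "(M + 1)*Cj = R*Cr" "R = J + 1" "S = R + M"
  shows "(Cj + Cr)*X*(S - D)*(Y*T) = ((R + S - D)*T)*(Cr*X*Y) + Cj*((J - D)*X)*(Y*T)"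
proof -
  have "((R + S - D)*T)*(Cr*X*Y) + Cj*((J - D)*X)*(Y*T) - (Cj + Cr)*X*(S - D)*(Y*T)
      = X*Y*T*(R*Cr - (M+1)*Cj)"
    using assms(2,3) by (simp add: algebra_simps)
  then show ?thesis
    using assms(1) by simp
qed

lemma reflect_a_coeff_RA_recurrence:
  fixes a :: "'a::field"
  assumes "(2::'a) \<noteq> 0"
  shows "reflect_a_coeff a d r (s+1) = (rac_theta (-a-1) d r - rac_theta a d s) * reflect_a_coeff a d r s
           + (if 0 < r then reflect_a_coeff a d (r-1) s else 0)"
proof (cases "r \<le> s")
  case False
  then show ?thesis
    by (cases "r = s+1") (auto simp: reflect_a_coeff_def)
next
  case True
  then obtain m where s: "s = r + m" using le_Suc_ex by blast
  define t where "t = 2*a+1"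
  define X where "X = (\<Prod>k\<in>{r..<s}. (of_nat k - of_nat d::'a))"
  define Y where "Y = (\<Prod>k<m. (t - of_nat k))"
  have next_col: "reflect_a_coeff a d r (s+1)
      = of_nat (Suc s choose r) * X * (of_nat s - of_nat d) * (Y * (t - of_nat m))"
    unfolding reflect_a_coeff_def X_def Y_def t_def using s by (simp add: Suc_diff_le)
  have this_col: "reflect_a_coeff a d r s = of_nat (s choose r) * X * Y"
    unfolding reflect_a_coeff_def X_def Y_def t_def using s by simp
  have theta: "rac_theta (-a-1) d r - rac_theta a d s
      = (of_nat r + of_nat s - of_nat d) * (t - of_nat m)"
    unfolding rac_theta_neg_diff[OF assms] t_def s by (simp add: algebra_simps)
  show ?thesis
  proof (cases r)
    case 0
    then show ?thesis
      unfolding next_col this_col theta using s by (simp add: algebra_simps)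
  next
    case (Suc j)
    have Xj: "(\<Prod>k\<in>{j..<s}. (of_nat k - of_nat d::'a)) = (of_nat j - of_nat d) * X"
      unfolding X_def Suc using True Suc by (simp add: prod.atLeast_Suc_lessThan)
    have prev_row: "reflect_a_coeff a d j s
        = of_nat (s choose j) * ((of_nat j - of_nat d) * X) * (Y * (t - of_nat m))"
      unfolding reflect_a_coeff_def Xj[symmetric] Y_def t_def using s Suc by simp
    have absorb: "(of_nat m + 1) * of_nat (s choose j) = (of_nat r * of_nat (s choose r)::'a)"
      using of_nat_choose_absorb(2)[of m j, where 'a='a] unfolding s Suc by (simp add: add_ac)
    have pascal: "of_nat (Suc s choose r) = (of_nat (s choose j) + of_nat (s choose r) :: 'a)"
      using Suc by simp
    have "reflect_a_coeff a d r (s+1)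
        = (of_nat (s choose j) + of_nat (s choose r)) * X * (of_nat s - of_nat d) * (Y * (t - of_nat m))"
      unfolding next_col pascal ..
    also have "\<dots> = ((of_nat r + of_nat s - of_nat d) * (t - of_nat m)) * (of_nat (s choose r) * X * Y)
          + of_nat (s choose j) * ((of_nat j - of_nat d) * X) * (Y * (t - of_nat m))"
      by (rule reflect_a_step_identity) (use absorb Suc s in simp_all)
    also have "\<dots> = (rac_theta (-a-1) d r - rac_theta a d s) * reflect_a_coeff a d r s
        + (if 0 < r then reflect_a_coeff a d (r-1) s else 0)"
      unfolding theta this_col using Suc prev_row by simp
    finally show ?thesis .
  qed
qed

lemma rac_theta_phi_reflect_identity:
  fixes a b c :: "'a::field"
  shows "(rac_theta b d (r+m+1) - rac_theta b d r) * (2*a+1 - of_nat m)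
      + (of_nat m + 1) * ((a+b+c + half_d d - of_nat (r+m+1) + 2) * (a+b-c + half_d d - of_nat (r+m+1) + 1))
    = (of_nat m + 1) * ((-a-1+b+c + half_d d - of_nat (r+1) + 2) * (-a-1+b-c + half_d d - of_nat (r+1) + 1))"
  unfolding rac_theta_def by (simp add: algebra_simps)

lemma reflect_a_coeff_RB_recurrence:
  fixes a b c :: "'a::field"
  shows "(rac_theta b d s - rac_theta b d r) * reflect_a_coeff a d r s
      + (if 0 < s then rac_phi a b c d s * reflect_a_coeff a d r (s-1) else 0)
    = rac_phi (-a-1) b c d (r+1) * reflect_a_coeff a d (r+1) s"
proof (cases "r < s")
  case False
  then show ?thesis by (cases "r = s") (auto simp: reflect_a_coeff_def)
next
  case True
  then obtain m where s: "s = r + m + 1" using less_iff_Suc_add by auto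
  define t where "t = 2*a+1"
  define P1 where "P1 = (\<Prod>k\<in>{r..<s}. (of_nat k - of_nat d::'a))"
  define P2 where "P2 = (\<Prod>k\<in>{r..<r+m}. (of_nat k - of_nat d::'a))"
  define P3 where "P3 = (\<Prod>k\<in>{Suc r..<s}. (of_nat k - of_nat d::'a))"
  define Y where "Y = (\<Prod>k<m. (t - of_nat k))"
  define C0 where "C0 = (of_nat ((r+m) choose r) :: 'a)"
  define C1 where "C1 = (of_nat (s choose r) :: 'a)"
  define C2 where "C2 = (of_nat (s choose Suc r) :: 'a)"
  define F where "F = (a+b+c + half_d d - of_nat s + 2) * (a+b-c + half_d d - of_nat s + 1)"
  define G where "G = (-a-1+b+c + half_d d - of_nat (r+1) + 2) * (-a-1+b-c + half_d d - of_nat (r+1) + 1)"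
  have P1_left: "P1 = (of_nat r - of_nat d) * P3"
    unfolding P1_def P3_def using s by (simp add: prod.atLeast_Suc_lessThan)
  have P1_right: "P1 = P2 * (of_nat (r+m) - of_nat d)"
    unfolding P1_def P2_def using s by simp
  have C1_C0: "(of_nat m + 1) * C1 = of_nat s * C0"
    unfolding C0_def C1_def s by (rule of_nat_choose_absorb(1))
  have "(of_nat r + 1) * C2 = (of_nat m + 1) * C1"
    unfolding C1_def C2_def s by (rule of_nat_choose_absorb(2)[symmetric])
  then have C2_C0: "(of_nat r + 1) * C2 = of_nat s * C0"
    unfolding C1_C0 .
  have coeff: "reflect_a_coeff a d r s = C1 * P1 * (Y * (t - of_nat m))"
    "reflect_a_coeff a d r (s-1) = C0 * P2 * Y"
    "reflect_a_coeff a d (r+1) s = C2 * P3 * Y"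
    unfolding reflect_a_coeff_def C0_def C1_def C2_def P1_def P2_def P3_def Y_def t_def
    using s by (simp_all add: Suc_diff_le)
  have phi: "rac_phi a b c d s = of_nat s * (of_nat r + of_nat m - of_nat d) * F"
    "rac_phi (-a-1) b c d (r+1) = (of_nat r + 1) * (of_nat r - of_nat d) * G"
    unfolding rac_phi_def F_def G_def s by (simp_all add: algebra_simps)
  have "(rac_theta b d s - rac_theta b d r) * reflect_a_coeff a d r s
      + (if 0 < s then rac_phi a b c d s * reflect_a_coeff a d r (s-1) else 0)
    = (rac_theta b d s - rac_theta b d r) * (C1 * P1 * (Y * (t - of_nat m)))
      + (of_nat r + of_nat m - of_nat d) * F * Y * P2 * (of_nat s * C0)"
    unfolding coeff phi using s by simp
  also have "\<dots> = Y * C1 * P1 * ((rac_theta b d s - rac_theta b d r) * (t - of_nat m) + (of_nat m + 1) * F)"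
    unfolding C1_C0[symmetric] P1_right by (simp add: algebra_simps)
  also have "\<dots> = Y * C1 * P1 * ((of_nat m + 1) * G)"
    using rac_theta_phi_reflect_identity[of b d r m a c] unfolding F_def G_def t_def s by simp
  also have "\<dots> = Y * P1 * G * ((of_nat r + 1) * C2)"
    unfolding C2_C0 C1_C0[symmetric] by (simp add: algebra_simps)
  also have "\<dots> = rac_phi (-a-1) b c d (r+1) * reflect_a_coeff a d (r+1) s"
    unfolding coeff phi P1_left by (simp add: algebra_simps)
  finally show ?thesis .
qed

lemma reflect_a_mat_carrier: "reflect_a_mat d a \<in> carrier_mat (d+1) (d+1)"
  by (simp add: reflect_a_mat_def)

lemma reflect_a_mat_RA:
  fixes a b c :: "'a::field"
  assumes "(2::'a) \<noteq> 0"
  shows "reflect_a_mat d a * RA d a b c = RA d (-a-1) b c * reflect_a_mat d a"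
proof (rule eq_matI)
  fix r s
  assume "r < dim_row (RA d (-a-1) b c * reflect_a_mat d a)" "s < dim_col (RA d (-a-1) b c * reflect_a_mat d a)"
  then have r: "r \<le> d" and s: "s \<le> d"
    by (auto simp: RA_def reflect_a_mat_def)
  have "reflect_a_coeff a d r (s+1) = 0" if "s = d"
    using that reflect_a_coeff_top[OF r, of a] by simp
  then show "(reflect_a_mat d a * RA d a b c) $$ (r,s) = (RA d (-a-1) b c * reflect_a_mat d a) $$ (r,s)"
    unfolding mult_RA_index[OF reflect_a_mat_carrier r s] RA_mult_index[OF reflect_a_mat_carrier r s]
    using r s reflect_a_coeff_RA_recurrence[OF assms, of a d r s]
    by (auto simp: reflect_a_mat_def algebra_simps)
qed (auto simp: RA_def reflect_a_mat_def)

lemma reflect_a_mat_RB: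
  fixes a b c :: "'a::field"
  shows "reflect_a_mat d a * RB d a b c = RB d (-a-1) b c * reflect_a_mat d a"
proof (rule eq_matI)
  fix r s
  assume "r < dim_row (RB d (-a-1) b c * reflect_a_mat d a)" "s < dim_col (RB d (-a-1) b c * reflect_a_mat d a)"
  then have r: "r \<le> d" and s: "s \<le> d"
    by (auto simp: RB_def reflect_a_mat_def)
  have "rac_phi (-a-1) b c d (r+1) = 0" if "r = d"
    using that rac_phi_top by simp
  then show "(reflect_a_mat d a * RB d a b c) $$ (r,s) = (RB d (-a-1) b c * reflect_a_mat d a) $$ (r,s)"
    unfolding mult_RB_index[OF reflect_a_mat_carrier r s] RB_mult_index[OF reflect_a_mat_carrier r s]
    using r s reflect_a_coeff_RB_recurrence[of b d s r a c]
    by (auto simp: reflect_a_mat_def algebra_simps)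
qed (auto simp: RB_def reflect_a_mat_def)

lemma det_reflect_a_mat: "det (reflect_a_mat d a) = 1"
proof -
  have "upper_triangular (reflect_a_mat d a)"
    by (auto simp: reflect_a_mat_def reflect_a_coeff_def)
  then have "det (reflect_a_mat d a) = prod_list (diag_mat (reflect_a_mat d a))"
    using reflect_a_mat_carrier by (rule det_upper_triangular)
  also have "\<dots> = 1"
    unfolding prod_list_diag_prod by (simp add: reflect_a_mat_def reflect_a_coeff_def)
  finally show ?thesis .
qed

lemma simultaneously_similar_reflect_a:
  fixes a b c :: "'a::field"
  assumes "(2::'a) \<noteq> 0"
  shows "simultaneously_similar (RA d a b c) (RB d a b c) (RA d (-a-1) b c) (RB d (-a-1) b c)"
  by (rule simultaneously_similar_if_det_nonzero[OF reflect_a_mat_carrier[of d a]])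
    (use RA_carrier RB_carrier in \<open>simp_all add: det_reflect_a_mat reflect_a_mat_RA[OF assms] reflect_a_mat_RB\<close>)

lemma rac_iso_reflect_a:
  fixes a b c :: "'a::field"
  assumes "(2::'a) \<noteq> 0"
  shows "rac_iso d a b c (-a-1) b c"
  by (rule rac_iso_if_simultaneously_similar[OF simultaneously_similar_reflect_a[OF assms]])
    (simp add: rac_delta_neg_a)

section \<open>Irreducibility forces \<open>\<phi>\<^sub>i \<noteq> 0\<close>\<close>

lemma mult_mat_vec_zero: "A \<in> carrier_mat nr n \<Longrightarrow> A *\<^sub>v 0\<^sub>v n = 0\<^sub>v nr"
  by (rule eq_vecI) (auto simp: scalar_prod_def)

lemma is_submodule_vimage:
  fixes P :: "'a::field mat"
  assumes P: "P \<in> carrier_mat n n" and U: "is_submodule n Ms' U"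
    and len: "length Ms = length Ms'"
    and carrier: "set Ms \<subseteq> carrier_mat n n" "set Ms' \<subseteq> carrier_mat n n"
    and intertwine: "\<And>i. i < length Ms \<Longrightarrow> P * Ms ! i = Ms' ! i * P"
  shows "is_submodule n Ms {v \<in> carrier_vec n. P *\<^sub>v v \<in> U}"
proof -
  have "P *\<^sub>v (M *\<^sub>v v) \<in> U" if "M \<in> set Ms" "v \<in> carrier_vec n" "P *\<^sub>v v \<in> U" for M v
  proof -
    obtain i where i: "i < length Ms" "M = Ms ! i"
      using \<open>M \<in> set Ms\<close> by (auto simp: in_set_conv_nth)
    have M': "Ms' ! i \<in> carrier_mat n n"
      using carrier(2) i len by auto
    have "P *\<^sub>v (M *\<^sub>v v) = (P * M) *\<^sub>v v"
      using P that carrier(1) by auto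
    also have "\<dots> = Ms' ! i *\<^sub>v (P *\<^sub>v v)"
      using P M' that(2) by (simp add: i intertwine)
    finally show ?thesis
      using U that(3) i len unfolding is_submodule_def by auto
  qed
  then show ?thesis
    using U P carrier unfolding is_submodule_def
    by (auto simp: mult_mat_vec_zero[OF P] mult_add_distrib_mat_vec[OF P] mult_mat_vec[OF P])
qed

lemma index_mult_mat_vec_sum:
  assumes "A \<in> carrier_mat n n" "v \<in> carrier_vec n" "k < n"
  shows "(A *\<^sub>v v) $ k = (\<Sum>l<n. A $$ (k,l) * v $ l)"
  using assms by (auto simp: scalar_prod_def lessThan_atLeast0 intro!: sum.cong)

lemma RA_mult_vec_index:
  assumes "v \<in> carrier_vec (d+1)" "k \<le> d"
  shows "(RA d a b c *\<^sub>v v) $ k = rac_theta a d k * v $ k + (if 0 < k then v $ (k-1) else 0)"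
proof -
  have "(RA d a b c *\<^sub>v v) $ k = (\<Sum>l<d+1. RA d a b c $$ (k,l) * v $ l)"
    using assms by (intro index_mult_mat_vec_sum) (auto simp: RA_def)
  also have "\<dots> = (\<Sum>l<d+1. (if l = k then rac_theta a d k * v $ l else 0)
      + (if l = k - 1 then (if 0 < k then v $ l else 0) else 0))"
    by (rule sum.cong) (use assms in \<open>auto simp: RA_def\<close>)
  finally show ?thesis using assms by (auto simp: sum.distrib)
qed

lemma RB_mult_vec_index:
  assumes "v \<in> carrier_vec (d+1)" "k \<le> d"
  shows "(RB d a b c *\<^sub>v v) $ k
    = rac_theta b d k * v $ k + (if k < d then rac_phi a b c d (k+1) * v $ (k+1) else 0)"
proof -
  have "(RB d a b c *\<^sub>v v) $ k = (\<Sum>l<d+1. RB d a b c $$ (k,l) * v $ l)"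
    using assms by (intro index_mult_mat_vec_sum) (auto simp: RB_def)
  also have "\<dots> = (\<Sum>l<d+1. (if l = k then rac_theta b d k * v $ l else 0)
      + (if l = k + 1 then rac_phi a b c d l * v $ l else 0))"
    by (rule sum.cong) (use assms in \<open>auto simp: RB_def\<close>)
  finally show ?thesis using assms by (simp add: sum.distrib)
qed

lemma RC_mult_vec:
  fixes a b c :: "'a::field"
  assumes v: "v \<in> carrier_vec (d+1)"
  shows "RC d a b c *\<^sub>v v = rac_delta a b c d \<cdot>\<^sub>v v - RA d a b c *\<^sub>v v - RB d a b c *\<^sub>v v"
proof -
  let ?S = "rac_delta a b c d \<cdot>\<^sub>m 1\<^sub>m (d+1)"
  have S: "?S \<in> carrier_mat (d+1) (d+1)" by simp
  have "RC d a b c *\<^sub>v v = (?S - RA d a b c) *\<^sub>v v - RB d a b c *\<^sub>v v"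
    unfolding RC_def by (rule minus_mult_distrib_mat_vec[OF _ RB_carrier v]) (use RA_carrier in \<open>simp add: minus_carrier_mat\<close>)
  also have "(?S - RA d a b c) *\<^sub>v v = ?S *\<^sub>v v - RA d a b c *\<^sub>v v"
    by (rule minus_mult_distrib_mat_vec[OF S RA_carrier v])
  also have "?S *\<^sub>v v = rac_delta a b c d \<cdot>\<^sub>v v"
    by (rule eq_vecI) (use v in auto)
  finally show ?thesis .
qed

lemma RD_mult_vec:
  fixes a b c :: "'a::field"
  assumes v: "v \<in> carrier_vec (d+1)"
  shows "RD d a b c *\<^sub>v v
    = inverse 2 \<cdot>\<^sub>v (RA d a b c *\<^sub>v (RB d a b c *\<^sub>v v) - RB d a b c *\<^sub>v (RA d a b c *\<^sub>v v))"
proof -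
  let ?A = "RA d a b c" and ?B = "RB d a b c"
  have AB: "?A * ?B \<in> carrier_mat (d+1) (d+1)" "?B * ?A \<in> carrier_mat (d+1) (d+1)"
    by (meson RA_carrier RB_carrier mult_carrier_mat)+
  have "RD d a b c *\<^sub>v v = inverse 2 \<cdot>\<^sub>v ((?A * ?B - ?B * ?A) *\<^sub>v v)"
    unfolding RD_def by (rule eq_vecI) (use v AB in auto)
  also have "(?A * ?B - ?B * ?A) *\<^sub>v v = (?A * ?B) *\<^sub>v v - (?B * ?A) *\<^sub>v v"
    by (rule minus_mult_distrib_mat_vec[OF AB v])
  also have "\<dots> = ?A *\<^sub>v (?B *\<^sub>v v) - ?B *\<^sub>v (?A *\<^sub>v v)"
    by (simp add: assoc_mult_mat_vec[OF RA_carrier RB_carrier v] assoc_mult_mat_vec[OF RB_carrier RA_carrier v])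
  finally show ?thesis .
qed

lemma is_submodule_rac_gensI:
  fixes W :: "'a::field vec set"
  assumes W: "W \<subseteq> carrier_vec (d+1)" "0\<^sub>v (d+1) \<in> W"
    and add: "\<And>v w. v \<in> W \<Longrightarrow> w \<in> W \<Longrightarrow> v + w \<in> W"
    and smult: "\<And>k v. v \<in> W \<Longrightarrow> k \<cdot>\<^sub>v v \<in> W"
    and A: "\<And>v. v \<in> W \<Longrightarrow> RA d a b c *\<^sub>v v \<in> W"
    and B: "\<And>v. v \<in> W \<Longrightarrow> RB d a b c *\<^sub>v v \<in> W"
  shows "is_submodule (d+1) (rac_gens d a b c) W"
proof -
  have minus: "v - w \<in> W" if "v \<in> W" "w \<in> W" for v w
  proof -
    have "v - w = v + (-1) \<cdot>\<^sub>v w"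
      using that W(1) by (intro eq_vecI) auto
    then show ?thesis
      using that add smult by simp
  qed
  have "RC d a b c *\<^sub>v v \<in> W" "RD d a b c *\<^sub>v v \<in> W" if "v \<in> W" for v
    using that W(1) by (auto simp: RC_mult_vec RD_mult_vec intro!: minus smult A B)
  then show ?thesis
    unfolding is_submodule_def rac_gens_def using assms by auto
qed

definition tail_span :: "nat \<Rightarrow> nat \<Rightarrow> 'a::zero vec set" where
  "tail_span n i = {v \<in> carrier_vec n. \<forall>k<i. v $ k = 0}"

lemma tail_span_submodule:
  fixes a b c :: "'a::field"
  assumes "i \<le> d" and "rac_phi a b c d i = 0"
  shows "is_submodule (d+1) (rac_gens d a b c) (tail_span (d+1) i)"
proof (rule is_submodule_rac_gensI)
  fix v :: "'a vec"
  assume v: "v \<in> tail_span (d+1) i"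
  then show "RA d a b c *\<^sub>v v \<in> tail_span (d+1) i"
    using assms(1) mult_mat_vec_carrier[OF RA_carrier] by (auto simp: tail_span_def RA_mult_vec_index)
  have "rac_phi a b c d (k+1) * v $ (k+1) = 0" if "k < i" for k
    using that v assms(2) by (cases "k+1 = i") (auto simp: tail_span_def)
  then show "RB d a b c *\<^sub>v v \<in> tail_span (d+1) i"
    using v assms(1) mult_mat_vec_carrier[OF RB_carrier] by (auto simp: tail_span_def RB_mult_vec_index)
qed (use assms(1) in \<open>auto simp: tail_span_def\<close>)

lemma rac_phi_nonzero_if_irreducible:
  fixes a b c :: "'a::field"
  assumes irr: "rac_irreducible d a b c" and iso: "rac_iso d a b c a' b' c'"
    and i: "0 < i" "i \<le> d"
  shows "rac_phi a' b' c' d i \<noteq> 0"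
proof
  assume "rac_phi a' b' c' d i = 0"
  then have U: "is_submodule (d+1) (rac_gens d a' b' c') (tail_span (d+1) i)"
    using i by (intro tail_span_submodule)
  obtain P Q where P: "P \<in> carrier_mat (d+1) (d+1)" and Q: "Q \<in> carrier_mat (d+1) (d+1)"
    and PQ: "P * Q = 1\<^sub>m (d+1)"
    and intertwine: "\<forall>j<4. P * rac_gens d a b c ! j = rac_gens d a' b' c' ! j * P"
    using iso unfolding rac_iso_def by blast
  define W where "W = {v \<in> carrier_vec (d+1). P *\<^sub>v v \<in> tail_span (d+1) i}"
  have "length (rac_gens d a b c) = 4" "length (rac_gens d a' b' c') = 4"
    by (simp_all add: rac_gens_def)
  then have "is_submodule (d+1) (rac_gens d a b c) W"
    unfolding W_def using P U intertwine rac_gens_carrier by (intro is_submodule_vimage) auto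
  then have W: "W = {0\<^sub>v (d+1)} \<or> W = carrier_vec (d+1)"
    using irr unfolding rac_irreducible_def by blast
  have PQ_unit: "P *\<^sub>v (Q *\<^sub>v unit_vec (d+1) j) = unit_vec (d+1) j" for j
    using P Q by (simp flip: assoc_mult_mat_vec add: PQ)
  have "(unit_vec (d+1) d :: 'a vec) \<in> tail_span (d+1) i"
    using i by (simp add: tail_span_def)
  then have "Q *\<^sub>v unit_vec (d+1) d \<in> W"
    unfolding W_def using Q PQ_unit[of d] by simp
  moreover have "Q *\<^sub>v unit_vec (d+1) d \<noteq> 0\<^sub>v (d+1)"
  proof
    assume "Q *\<^sub>v unit_vec (d+1) d = 0\<^sub>v (d+1)"
    then have "(unit_vec (d+1) d :: 'a vec) = 0\<^sub>v (d+1)"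
      using PQ_unit[of d] mult_mat_vec_zero[OF P] by simp
    then have "(unit_vec (d+1) d :: 'a vec) $ d = 0\<^sub>v (d+1) $ d"
      by simp
    then show False
      by simp
  qed
  moreover have "(unit_vec (d+1) 0 :: 'a vec) \<notin> tail_span (d+1) i"
    using i by (auto simp: tail_span_def)
  then have "Q *\<^sub>v unit_vec (d+1) 0 \<notin> W"
    unfolding W_def using PQ_unit[of 0] by simp
  ultimately show False
    using W Q by auto
qed

section \<open>Duality and the isomorphism \<open>R\<^sub>d(a,b,c) \<cong> R\<^sub>d(a,-b-1,c)\<close>\<close>

definition rac_phi_prod :: "'a::field \<Rightarrow> 'a \<Rightarrow> 'a \<Rightarrow> nat \<Rightarrow> nat \<Rightarrow> 'a" where
  "rac_phi_prod a b c d s = (\<Prod>k<s. rac_phi a b c d (k+1))"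

lemma transpose_RB_mult_diag:
  "(RB d a b c)\<^sup>T * mat_diag (d+1) (rac_phi_prod a b c d)
    = mat_diag (d+1) (rac_phi_prod a b c d) * RA d b a c"
proof -
  have carrier: "(RB d a b c)\<^sup>T \<in> carrier_mat (d+1) (d+1)" "RA d b a c \<in> carrier_mat (d+1) (d+1)"
    by (simp_all add: RA_def RB_def)
  show ?thesis
    unfolding mat_diag_mult_right[OF carrier(1)] mat_diag_mult_left[OF carrier(2)]
    by (auto simp: RA_def RB_def rac_phi_prod_def intro!: eq_matI)
qed

lemma transpose_RA_mult_diag:
  "(RA d a b c)\<^sup>T * mat_diag (d+1) (rac_phi_prod a b c d)
    = mat_diag (d+1) (rac_phi_prod a b c d) * RB d b a c"
proof -
  have carrier: "(RA d a b c)\<^sup>T \<in> carrier_mat (d+1) (d+1)" "RB d b a c \<in> carrier_mat (d+1) (d+1)"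
    by (simp_all add: RA_def RB_def)
  show ?thesis
    unfolding mat_diag_mult_right[OF carrier(1)] mat_diag_mult_left[OF carrier(2)]
    by (auto simp: RA_def RB_def rac_phi_prod_def rac_phi_swap intro!: eq_matI)
qed

lemma simultaneously_similar_dual:
  fixes a b c :: "'a::field"
  assumes "\<And>k. 0 < k \<Longrightarrow> k \<le> d \<Longrightarrow> rac_phi a b c d k \<noteq> 0"
  shows "simultaneously_similar (RA d b a c) (RB d b a c) (RB d a b c)\<^sup>T (RA d a b c)\<^sup>T"
proof -
  let ?f = "rac_phi_prod a b c d"
  have "?f i \<noteq> 0" if "i < d+1" for i
    using assms that by (auto simp: rac_phi_prod_def)
  then have "mat_diag (d+1) ?f * mat_diag (d+1) (\<lambda>i. inverse (?f i)) = 1\<^sub>m (d+1)"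
    "mat_diag (d+1) (\<lambda>i. inverse (?f i)) * mat_diag (d+1) ?f = 1\<^sub>m (d+1)"
    unfolding mat_diag_diag by (auto simp: mat_diag_def intro!: eq_matI)
  note inverse = this
  show ?thesis
  proof (rule simultaneously_similarI[OF _ _ inverse])
    show "mat_diag (d+1) ?f * RA d b a c = (RB d a b c)\<^sup>T * mat_diag (d+1) ?f"
      by (rule transpose_RB_mult_diag[symmetric])
    show "mat_diag (d+1) ?f * RB d b a c = (RA d a b c)\<^sup>T * mat_diag (d+1) ?f"
      by (rule transpose_RA_mult_diag[symmetric])
  qed (simp_all add: RA_def RB_def)
qed

lemma simultaneously_similar_reflect_b:
  fixes a b c :: "'a::field"
  assumes two: "(2::'a) \<noteq> 0"
    and "\<And>k. 0 < k \<Longrightarrow> k \<le> d \<Longrightarrow> rac_phi a b c d k \<noteq> 0"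
    and "\<And>k. 0 < k \<Longrightarrow> k \<le> d \<Longrightarrow> rac_phi a (-b-1) c d k \<noteq> 0"
  shows "simultaneously_similar (RA d a b c) (RB d a b c) (RA d a (-b-1) c) (RB d a (-b-1) c)"
proof -
  have "simultaneously_similar (RA d b a c) (RB d b a c) (RB d a b c)\<^sup>T (RA d a b c)\<^sup>T"
    using assms(2) by (rule simultaneously_similar_dual)
  then have "simultaneously_similar (RB d a b c)\<^sup>T (RA d a b c)\<^sup>T (RA d b a c) (RB d b a c)"
    by (rule simultaneously_similar_sym)
  also have "simultaneously_similar (RA d b a c) (RB d b a c) (RA d (-b-1) a c) (RB d (-b-1) a c)"
    using two by (rule simultaneously_similar_reflect_a)
  also have "simultaneously_similar (RA d (-b-1) a c) (RB d (-b-1) a c)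
      (RB d a (-b-1) c)\<^sup>T (RA d a (-b-1) c)\<^sup>T"
    using assms(3) by (rule simultaneously_similar_dual)
  finally have "simultaneously_similar (RB d a b c)\<^sup>T (RA d a b c)\<^sup>T
      (RB d a (-b-1) c)\<^sup>T (RA d a (-b-1) c)\<^sup>T" .
  from simultaneously_similar_transpose[OF this] show ?thesis
    unfolding transpose_transpose by (rule simultaneously_similar_commute)
qed

lemma rac_iso_reflect_b:
  fixes a b c :: "'a::field"
  assumes two: "(2::'a) \<noteq> 0" and irr: "rac_irreducible d a b c"
  shows "rac_iso d a b c a (-b-1) c"
proof -
  have phi: "rac_phi a b c d k \<noteq> 0" if "0 < k" "k \<le> d" for k
    using irr rac_iso_refl that by (rule rac_phi_nonzero_if_irreducible)
  have phi': "rac_phi a (-b-1) c d k \<noteq> 0" if "0 < k" "k \<le> d" for k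
  proof -
    have "rac_phi (-a-1) b c d (d+1-k) \<noteq> 0"
      using that by (intro rac_phi_nonzero_if_irreducible[OF irr rac_iso_reflect_a[OF two]]) auto
    then show ?thesis
      unfolding rac_phi_neg_b[OF two that(2)] .
  qed
  have "simultaneously_similar (RA d a b c) (RB d a b c) (RA d a (-b-1) c) (RB d a (-b-1) c)"
    using two phi phi' by (rule simultaneously_similar_reflect_b)
  then show ?thesis
    using rac_delta_neg_b[symmetric] by (rule rac_iso_if_simultaneously_similar)
qed

theorem theorem5p3:
  fixes a b c :: "'a::alg_closed_field" and d :: nat
  assumes "(2::'a) \<noteq> 0"
    and "rac_irreducible d a b c"
  shows "rac_iso d a b c (-a-1) b c \<and> rac_iso d a b c a (-b-1) c \<and> rac_iso d a b c a b (-c-1)"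
proof (intro conjI)
  show "rac_iso d a b c (-a-1) b c"
    using assms(1) by (rule rac_iso_reflect_a)
  show "rac_iso d a b c a (-b-1) c"
    using assms by (rule rac_iso_reflect_b)
  show "rac_iso d a b c a b (-c-1)"
    using rac_iso_refl[of d a b c] unfolding rac_iso_def rac_gens_neg_c .
qed

end
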